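(* Let $W\in\mathcal{P}(\mathcal{Y}|\mathcal{X})$ be singular. Consider any $(N,R)$ code $(f,\varphi)$ with codewords $\mathbf{x}^N(m)$, $m\in\mathcal{M}$, and average error probability $\bar{\mathrm{P}}_{\mathrm{e}}(f,\varphi)$. Fix $Q\in\mathcal{P}(\mathcal{X})$ and $\mathbf{z}^N\in\mathcal{X}^N$, and assume that for all $m\in\mathcal{M}$, $W(\mathcal{S}_R(Q)\mid\mathbf{x}^N(m))=W(\mathcal{S}_R(Q)\mid\mathbf{z}^N)$ and $q_Q$ dominates $W(\cdot|x)$ for every $x$ in the support of the empirical distribution of $\mathbf{x}^N(m)$. Then $$\bar{\mathrm{P}}_{\mathrm{e}}(f,\varphi)\ge W(\mathcal{S}_R(Q)\mid\mathbf{z}^N)-\sum_{\mathbf{y}^N\in\mathcal{S}_R(Q)}q_Q(\mathbf{y}^N)\exp\Big\{-N\Big[R-\frac1N\sum_{i=1}^N\ln\frac1{\alpha_{y_i}(Q)}\Big]\Big\}.$$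
   Context: $\mathcal{X},\mathcal{Y}$ finite; memoryless channel $W(\mathbf{y}^N|\mathbf{x}^N)=\prod_iW(y_i|x_i)$. $W$ is singular: for all $(x,y,z)$ with $W(y|x)W(y|z)>0$, $W(y|x)=W(y|z)$. An $(N,R)$ code has message set $\mathcal{M}=\{1,\dots,\lceil e^{NR}\rceil\}$, encoder $f$ and decoder $\varphi:\mathcal{Y}^N\to\mathcal{M}$; average error probability is over uniform messages. $q_Q(y)=\sum_xQ(x)W(y|x)$, $q_Q(\mathbf{y}^N)=\prod_iq_Q(y_i)$; $\alpha_y(Q)=\sum_{x:W(y|x)>0}Q(x)$; $\mathcal{S}_R(Q)=\{\mathbf{y}^N:\frac1N\sum_i\ln\frac1{\alpha_{y_i}(Q)}\le R\}$. "$q_Q$ dominates $W(\cdot|x)$" means $W(\cdot|x)\ll q_Q$. *)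

theory Defs
  imports Complex_Main
begin

text \<open>Channel: W x y = W(y|x). Sequences of length N are lists.\<close>

definition channel :: "('x::finite \<Rightarrow> 'y::finite \<Rightarrow> real) \<Rightarrow> bool" where
  "channel W \<longleftrightarrow> (\<forall>x y. 0 \<le> W x y) \<and> (\<forall>x. (\<Sum>y\<in>UNIV. W x y) = 1)"

definition pdist :: "('x::finite \<Rightarrow> real) \<Rightarrow> bool" where
  "pdist Q \<longleftrightarrow> (\<forall>x. 0 \<le> Q x) \<and> (\<Sum>x\<in>UNIV. Q x) = 1"

definition singular :: "('x \<Rightarrow> 'y \<Rightarrow> real) \<Rightarrow> bool" where
  "singular W \<longleftrightarrow> (\<forall>x y z. W x y * W z y > 0 \<longrightarrow> W x y = W z y)"

definition chanN :: "('x \<Rightarrow> 'y \<Rightarrow> real) \<Rightarrow> 'x list \<Rightarrow> 'y list \<Rightarrow> real" where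
  "chanN W xs ys = (\<Prod>i<length ys. W (xs ! i) (ys ! i))"

definition chan_set :: "('x \<Rightarrow> 'y \<Rightarrow> real) \<Rightarrow> 'y list set \<Rightarrow> 'x list \<Rightarrow> real" where
  "chan_set W S xs = (\<Sum>ys\<in>S. chanN W xs ys)"

definition qQ :: "('x::finite \<Rightarrow> 'y \<Rightarrow> real) \<Rightarrow> ('x \<Rightarrow> real) \<Rightarrow> 'y \<Rightarrow> real" where
  "qQ W Q y = (\<Sum>x\<in>UNIV. Q x * W x y)"

definition qQN :: "('x::finite \<Rightarrow> 'y \<Rightarrow> real) \<Rightarrow> ('x \<Rightarrow> real) \<Rightarrow> 'y list \<Rightarrow> real" where
  "qQN W Q ys = (\<Prod>i<length ys. qQ W Q (ys ! i))"

definition alpha :: "('x::finite \<Rightarrow> 'y \<Rightarrow> real) \<Rightarrow> ('x \<Rightarrow> real) \<Rightarrow> 'y \<Rightarrow> real" where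
  "alpha W Q y = (\<Sum>x\<in>{x. W x y > 0}. Q x)"

text \<open>S_R(Q) among sequences of length N; ln(1/0) = +infinity, so any y with
  alpha_y(Q) = 0 excludes the sequence.\<close>
definition SR :: "('x::finite \<Rightarrow> 'y \<Rightarrow> real) \<Rightarrow> nat \<Rightarrow> real \<Rightarrow> ('x \<Rightarrow> real) \<Rightarrow> 'y list set" where
  "SR W N R Q = {ys. length ys = N \<and> (\<forall>i<N. alpha W Q (ys ! i) > 0) \<and>
      (1 / real N) * (\<Sum>i<N. ln (1 / alpha W Q (ys ! i))) \<le> R}"

definition msgs :: "nat \<Rightarrow> real \<Rightarrow> nat set" where
  "msgs N R = {1..nat \<lceil>exp (real N * R)\<rceil>}"

definition is_code :: "nat \<Rightarrow> real \<Rightarrow> (nat \<Rightarrow> 'x list) \<Rightarrow> ('y list \<Rightarrow> nat) \<Rightarrow> bool" where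
  "is_code N R f \<phi> \<longleftrightarrow> (\<forall>m\<in>msgs N R. length (f m) = N) \<and>
      (\<forall>ys. length ys = N \<longrightarrow> \<phi> ys \<in> msgs N R)"

definition avg_err :: "('x \<Rightarrow> 'y \<Rightarrow> real) \<Rightarrow> nat \<Rightarrow> real \<Rightarrow> (nat \<Rightarrow> 'x list) \<Rightarrow> ('y list \<Rightarrow> nat) \<Rightarrow> real" where
  "avg_err W N R f \<phi> = (1 / real (card (msgs N R))) *
     (\<Sum>m\<in>msgs N R. \<Sum>ys\<in>{ys. length ys = N \<and> \<phi> ys \<noteq> m}. chanN W (f m) ys)"

definition dominates :: "('y \<Rightarrow> real) \<Rightarrow> ('x \<Rightarrow> 'y \<Rightarrow> real) \<Rightarrow> 'x \<Rightarrow> bool" where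
  "dominates q W x \<longleftrightarrow> (\<forall>y. W x y > 0 \<longrightarrow> q y > 0)"

end

theory Submission
  imports Defs
begin

text \<open>For a singular channel, every input that can produce the output y produces it with the
  same probability, so q_Q(y) = W(y|x) alpha_y(Q) whenever W(y|x) > 0. Hence on sequences whose
  letters all have alpha_y(Q) > 0, W(y^N|x^N) <= q_Q(y^N) / prod_i alpha_{y_i}(Q) for every input
  sequence. Splitting the error event of each message along S_R(Q), the correct-decoding part inside
  S_R(Q) is at most this bound summed over the decoding region of the message; the decoding regions
  are disjoint, so averaging over the at least e^{NR} messages yields the claim.\<close>

lemma channel_nonneg: "channel W \<Longrightarrow> 0 \<le> W x y"
  unfolding channel_def by blast

lemma chanN_nonneg: "(\<And>x y. 0 \<le> W x y) \<Longrightarrow> 0 \<le> chanN W xs ys"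
  unfolding chanN_def by (simp add: prod_nonneg)

lemma finite_lists_of_length: "finite {ys :: 'y::finite list. length ys = N}"
  using finite_lists_length_eq[of "UNIV :: 'y set" N] by simp

lemma card_msgs_ge_exp: "exp (real N * R) \<le> real (card (msgs N R))"
  unfolding msgs_def by simp

lemma card_msgs_pos: "0 < card (msgs N R)"
  using card_msgs_ge_exp[of N R] exp_gt_zero[of "real N * R"] by linarith

lemma qQ_nonneg:
  assumes "\<And>x y. 0 \<le> W x y" and "\<And>x. 0 \<le> Q x"
  shows "0 \<le> qQ W Q y"
  unfolding qQ_def using assms by (simp add: sum_nonneg)

lemma singular_qQ_eq:
  fixes W :: "'x::finite \<Rightarrow> 'y \<Rightarrow> real"
  assumes "singular W" and "\<And>x y. 0 \<le> W x y" and "W x y > 0"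
  shows "qQ W Q y = W x y * alpha W Q y"
proof -
  have "qQ W Q y = (\<Sum>x'\<in>{x'. W x' y > 0}. Q x' * W x' y)"
    unfolding qQ_def
    by (rule sum.mono_neutral_right) (use assms(2) in \<open>auto simp: not_less intro: antisym\<close>)
  also have "\<dots> = (\<Sum>x'\<in>{x'. W x' y > 0}. Q x' * W x y)"
  proof (rule sum.cong)
    fix x' assume "x' \<in> {x'. W x' y > 0}"
    then have "W x' y * W x y > 0" using assms(3) by simp
    then show "Q x' * W x' y = Q x' * W x y" using assms(1) unfolding singular_def by metis
  qed simp
  also have "\<dots> = W x y * alpha W Q y"
    unfolding alpha_def by (simp add: sum_distrib_left mult.commute)
  finally show ?thesis .
qed

lemma singular_le_qQ_div_alpha:
  fixes W :: "'x::finite \<Rightarrow> 'y \<Rightarrow> real"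
  assumes "singular W" and "\<And>x y. 0 \<le> W x y" and "\<And>x. 0 \<le> Q x" and "alpha W Q y > 0"
  shows "W x y \<le> qQ W Q y / alpha W Q y"
proof (cases "W x y > 0")
  case True
  then show ?thesis using singular_qQ_eq[OF assms(1,2) True, of Q] assms(4) by simp
next
  case False
  then have "W x y = 0" using assms(2) by (meson antisym not_less)
  moreover have "0 \<le> qQ W Q y" using assms(2,3) by (rule qQ_nonneg)
  ultimately show ?thesis using assms(4) by simp
qed

lemma singular_chanN_le:
  fixes W :: "'x::finite \<Rightarrow> 'y \<Rightarrow> real"
  assumes "singular W" and "\<And>x y. 0 \<le> W x y" and "\<And>x. 0 \<le> Q x"
    and "\<And>i. i < length ys \<Longrightarrow> alpha W Q (ys ! i) > 0"
  shows "chanN W xs ys \<le> qQN W Q ys * exp (\<Sum>i<length ys. ln (1 / alpha W Q (ys ! i)))"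
proof -
  have "chanN W xs ys \<le> (\<Prod>i<length ys. qQ W Q (ys ! i) / alpha W Q (ys ! i))"
    unfolding chanN_def
    by (rule prod_mono) (use assms singular_le_qQ_div_alpha[OF assms(1-3)] in auto)
  also have "\<dots> = qQN W Q ys * (\<Prod>i<length ys. 1 / alpha W Q (ys ! i))"
    unfolding qQN_def by (simp add: prod.distrib[symmetric])
  also have "\<dots> = qQN W Q ys * exp (\<Sum>i<length ys. ln (1 / alpha W Q (ys ! i)))"
    using assms(4) by (simp add: exp_sum)
  finally show ?thesis .
qed

lemma singular_chanN_le_on_SR:
  fixes W :: "'x::finite \<Rightarrow> 'y \<Rightarrow> real"
  assumes "singular W" and "\<And>x y. 0 \<le> W x y" and "\<And>x. 0 \<le> Q x" and "ys \<in> SR W N R Q"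
  shows "chanN W xs ys \<le> qQN W Q ys * exp (\<Sum>i<N. ln (1 / alpha W Q (ys ! i)))"
proof -
  have len: "length ys = N" and pos: "\<And>i. i < length ys \<Longrightarrow> alpha W Q (ys ! i) > 0"
    using assms(4) unfolding SR_def by auto
  from singular_chanN_le[where W = W and Q = Q, OF assms(1-3) pos]
  show ?thesis unfolding len .
qed

lemma exp_div_exp_rate:
  assumes "N > 0"
  shows "exp L / exp (real N * R) = exp (- real N * (R - 1 / real N * L))"
proof -
  have "- real N * (R - 1 / real N * L) = L - real N * R"
    using assms by (simp add: field_simps)
  then show ?thesis by (simp add: exp_diff)
qed

lemma misdecoding_prob_ge:
  fixes W :: "'x \<Rightarrow> 'y::finite \<Rightarrow> real"
  assumes "\<And>x y. 0 \<le> W x y" and "finite S" and "S \<subseteq> {ys. length ys = N}"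
    and "\<And>ys. ys \<in> S \<Longrightarrow> chanN W xs ys \<le> B ys"
  shows "chan_set W S xs - (\<Sum>ys\<in>{ys\<in>S. \<phi> ys = m}. B ys)
    \<le> (\<Sum>ys\<in>{ys. length ys = N \<and> \<phi> ys \<noteq> m}. chanN W xs ys)"
proof -
  have "chan_set W S xs = (\<Sum>ys\<in>{ys\<in>S. \<phi> ys \<noteq> m}. chanN W xs ys)
      + (\<Sum>ys\<in>{ys\<in>S. \<phi> ys = m}. chanN W xs ys)"
    unfolding chan_set_def
    by (subst sum.union_disjoint[symmetric]) (use assms(2) in \<open>auto intro: sum.cong\<close>)
  moreover have "(\<Sum>ys\<in>{ys\<in>S. \<phi> ys = m}. chanN W xs ys) \<le> (\<Sum>ys\<in>{ys\<in>S. \<phi> ys = m}. B ys)"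
    using assms(4) by (intro sum_mono) auto
  moreover have "(\<Sum>ys\<in>{ys\<in>S. \<phi> ys \<noteq> m}. chanN W xs ys)
      \<le> (\<Sum>ys\<in>{ys. length ys = N \<and> \<phi> ys \<noteq> m}. chanN W xs ys)"
  proof (rule sum_mono2)
    show "finite {ys. length ys = N \<and> \<phi> ys \<noteq> m}"
      by (rule finite_subset[OF _ finite_lists_of_length[of N]]) blast
  qed (use assms(3) chanN_nonneg[where W = W, OF assms(1)] in auto)
  ultimately show ?thesis by linarith
qed

text \<open>Each output sequence in S is charged only to the message it is decoded to, so the
  charges of all messages add up to the sum of B over S.\<close>

lemma avg_err_ge:
  fixes W :: "'x \<Rightarrow> 'y::finite \<Rightarrow> real"
  assumes "\<And>x y. 0 \<le> W x y" and "is_code N R f \<phi>" and "S \<subseteq> {ys. length ys = N}"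
    and "\<And>m ys. m \<in> msgs N R \<Longrightarrow> ys \<in> S \<Longrightarrow> chanN W (f m) ys \<le> B ys"
    and "\<And>m. m \<in> msgs N R \<Longrightarrow> chan_set W S (f m) = c"
  shows "c - (\<Sum>ys\<in>S. B ys) / real (card (msgs N R)) \<le> avg_err W N R f \<phi>"
proof -
  let ?M = "msgs N R"
  have fin_S: "finite S" using finite_subset[OF assms(3) finite_lists_of_length] .
  have card_pos: "real (card ?M) > 0" using card_msgs_pos by simp
  have "\<phi> ` S \<subseteq> ?M" using assms(2,3) unfolding is_code_def by blast
  then have "(\<Sum>m\<in>?M. \<Sum>ys\<in>{ys\<in>S. \<phi> ys = m}. B ys) = (\<Sum>ys\<in>S. B ys)"
    by (intro sum.group fin_S) (simp add: msgs_def)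
  then have "real (card ?M) * c - (\<Sum>ys\<in>S. B ys)
      = (\<Sum>m\<in>?M. chan_set W S (f m) - (\<Sum>ys\<in>{ys\<in>S. \<phi> ys = m}. B ys))"
    using assms(5) by (simp add: sum_subtractf)
  also have "\<dots> \<le> (\<Sum>m\<in>?M. \<Sum>ys\<in>{ys. length ys = N \<and> \<phi> ys \<noteq> m}. chanN W (f m) ys)"
  proof (rule sum_mono)
    fix m assume "m \<in> ?M"
    then show "chan_set W S (f m) - (\<Sum>ys\<in>{ys\<in>S. \<phi> ys = m}. B ys)
        \<le> (\<Sum>ys\<in>{ys. length ys = N \<and> \<phi> ys \<noteq> m}. chanN W (f m) ys)"
      by (intro misdecoding_prob_ge[where W = W, OF assms(1) fin_S assms(3)] assms(4))
  qed
  finally have "(real (card ?M) * c - (\<Sum>ys\<in>S. B ys)) / real (card ?M) \<le> avg_err W N R f \<phi>"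
    unfolding avg_err_def using card_pos by (simp add: divide_right_mono)
  then show ?thesis using card_pos by (simp add: diff_divide_distrib)
qed

theorem lemma11:
  fixes W :: "'x::finite \<Rightarrow> 'y::finite \<Rightarrow> real"
    and Q :: "'x \<Rightarrow> real" and N :: nat and R :: real
    and f :: "nat \<Rightarrow> 'x list" and \<phi> :: "'y list \<Rightarrow> nat" and z :: "'x list"
  assumes "channel W" and "singular W" and "pdist Q"
    and "N > 0"
    and "is_code N R f \<phi>"
    and "length z = N"
    and "\<forall>m\<in>msgs N R. chan_set W (SR W N R Q) (f m) = chan_set W (SR W N R Q) z"
    and "\<forall>m\<in>msgs N R. \<forall>x\<in>set (f m). dominates (qQ W Q) W x"
  shows "avg_err W N R f \<phi> \<ge> chan_set W (SR W N R Q) z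
     - (\<Sum>ys\<in>SR W N R Q. qQN W Q ys *
          exp (- real N * (R - (1 / real N) * (\<Sum>i<N. ln (1 / alpha W Q (ys ! i))))))"
proof -
  let ?S = "SR W N R Q" and ?M = "msgs N R" and ?L = "\<lambda>ys. \<Sum>i<N. ln (1 / alpha W Q (ys ! i))"
  define B where "B ys = qQN W Q ys * exp (?L ys)" for ys
  have W_nonneg: "\<And>x y. 0 \<le> W x y" using assms(1) by (rule channel_nonneg)
  have Q_nonneg: "\<And>x. 0 \<le> Q x" using assms(3) unfolding pdist_def by blast
  have S_lists: "?S \<subseteq> {ys. length ys = N}" unfolding SR_def by blast
  have B_nonneg: "0 \<le> B ys" for ys
    unfolding B_def qQN_def using qQ_nonneg[where W = W and Q = Q, OF W_nonneg Q_nonneg]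
    by (simp add: prod_nonneg)
  have "chan_set W ?S z - (\<Sum>ys\<in>?S. B ys) / real (card ?M) \<le> avg_err W N R f \<phi>"
    using assms(7) unfolding B_def
    by (intro avg_err_ge[where W = W, OF W_nonneg assms(5) S_lists]
        singular_chanN_le_on_SR[where W = W and Q = Q, OF assms(2) W_nonneg Q_nonneg]) auto
  moreover have "(\<Sum>ys\<in>?S. B ys) / real (card ?M) \<le> (\<Sum>ys\<in>?S. B ys) / exp (real N * R)"
    using card_msgs_ge_exp[of N R] card_msgs_pos[of N R] B_nonneg
    by (intro divide_left_mono sum_nonneg mult_pos_pos) auto
  moreover have "(\<Sum>ys\<in>?S. B ys) / exp (real N * R)
      = (\<Sum>ys\<in>?S. qQN W Q ys * exp (- real N * (R - 1 / real N * ?L ys)))"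
    unfolding B_def sum_divide_distrib times_divide_eq_right[symmetric] exp_div_exp_rate[OF assms(4)] ..
  ultimately show ?thesis by linarith
qed

end
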